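(* Let $t$ be a normal term, $y$ a $\lambda$-variable, $\sigma=[(a_i:=^*y)_{1\le i\le n}]$ for distinct $\mu$-variables $a_1,\dots,a_n$, and let $\tau$ be the normal form of $t\sigma$. Then $t\sigma\triangleright^*_y\tau$.
   Context: $\lambda\mu$-terms: $t::= x\mid \lambda x.t\mid (t\;t)\mid \mu a.t\mid (a\;t)$ over disjoint infinite sets of $\lambda$-variables and $\mu$-variables. Reduction $(\lambda x.u\;v)\triangleright_\beta u[x:=v]$, $(\mu a.u\;v)\triangleright_\mu\mu a.u[a:=^*v]$, where $u[a:=^*v]$ replaces inductively each subterm $(a\;w)$ of $u$ by $(a\;(w\;v))$; a term is normal if it contains no redex. $t[(a_i:=^*y)_{1\le i\le n}]$ replaces inductively each subterm $(a_i\;w)$ by $(a_i\;(w\;y))$. For a $\lambda$-variable $y$, $u\triangleright_{\beta y}v$ (resp. $u\triangleright_{\mu y}v$) means $v$ is obtained from $u$ by contracting one redex of the form $(\lambda z.w\;y)$ (resp. $(\mu b.w\;y)$), i.e. a redex whose argument is the variable $y$; $\triangleright_y$ is the union of $\triangleright_{\beta y}$ and $\triangleright_{\mu y}$, and $\triangleright^*_y$ its reflexive transitive closure. *)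

theory Defs
  imports Main
begin

text \<open>Free lambda-variables and free mu-variables are names (nat);
bound variables are de Bruijn indices (separate counters for lambda- and mu-binders).
  FVar x     : free lambda-variable x
  BVar i     : bound lambda-variable (index i)
  Lam t      : lambda-abstraction
  App t u    : application (t u)
  Mu t       : mu-abstraction
  FNam a t   : (a t) with a free mu-variable a
  BNam i t   : (a t) with a bound mu-variable (index i)\<close>

datatype trm =
    FVar nat
  | BVar nat
  | Lam trm
  | App trm trm
  | Mu trm
  | FNam nat trm
  | BNam nat trm

fun lc :: "nat \<Rightarrow> nat \<Rightarrow> trm \<Rightarrow> bool" where
  "lc k m (FVar x) = True"
| "lc k m (BVar i) = (i < k)"
| "lc k m (Lam t) = lc (Suc k) m t"
| "lc k m (App t u) = (lc k m t \<and> lc k m u)"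
| "lc k m (Mu t) = lc k (Suc m) t"
| "lc k m (FNam a t) = lc k m t"
| "lc k m (BNam i t) = (i < m \<and> lc k m t)"

fun liftl :: "nat \<Rightarrow> trm \<Rightarrow> trm" where
  "liftl k (FVar x) = FVar x"
| "liftl k (BVar i) = (if i < k then BVar i else BVar (Suc i))"
| "liftl k (Lam t) = Lam (liftl (Suc k) t)"
| "liftl k (App t u) = App (liftl k t) (liftl k u)"
| "liftl k (Mu t) = Mu (liftl k t)"
| "liftl k (FNam a t) = FNam a (liftl k t)"
| "liftl k (BNam i t) = BNam i (liftl k t)"

fun liftm :: "nat \<Rightarrow> trm \<Rightarrow> trm" where
  "liftm k (FVar x) = FVar x"
| "liftm k (BVar i) = BVar i"
| "liftm k (Lam t) = Lam (liftm k t)"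
| "liftm k (App t u) = App (liftm k t) (liftm k u)"
| "liftm k (Mu t) = Mu (liftm (Suc k) t)"
| "liftm k (FNam a t) = FNam a (liftm k t)"
| "liftm k (BNam i t) = (if i < k then BNam i (liftm k t) else BNam (Suc i) (liftm k t))"

fun substl :: "nat \<Rightarrow> trm \<Rightarrow> trm \<Rightarrow> trm" where
  "substl k v (FVar x) = FVar x"
| "substl k v (BVar i) = (if i = k then v else if k < i then BVar (i - 1) else BVar i)"
| "substl k v (Lam t) = Lam (substl (Suc k) (liftl 0 v) t)"
| "substl k v (App t u) = App (substl k v t) (substl k v u)"
| "substl k v (Mu t) = Mu (substl k (liftm 0 v) t)"
| "substl k v (FNam a t) = FNam a (substl k v t)"
| "substl k v (BNam i t) = BNam i (substl k v t)"

fun substm :: "nat \<Rightarrow> trm \<Rightarrow> trm \<Rightarrow> trm" where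
  "substm k v (FVar x) = FVar x"
| "substm k v (BVar i) = BVar i"
| "substm k v (Lam t) = Lam (substm k (liftl 0 v) t)"
| "substm k v (App t u) = App (substm k v t) (substm k v u)"
| "substm k v (Mu t) = Mu (substm (Suc k) (liftm 0 v) t)"
| "substm k v (FNam a t) = FNam a (substm k v t)"
| "substm k v (BNam i t) =
     (if i = k then BNam i (App (substm k v t) v) else BNam i (substm k v t))"

text \<open>t[(a_i :=* y)_i] for free mu-variables as and a lambda-variable y\<close>
fun ssubst :: "nat list \<Rightarrow> nat \<Rightarrow> trm \<Rightarrow> trm" where
  "ssubst as y (FVar x) = FVar x"
| "ssubst as y (BVar i) = BVar i"
| "ssubst as y (Lam t) = Lam (ssubst as y t)"
| "ssubst as y (App t u) = App (ssubst as y t) (ssubst as y u)"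
| "ssubst as y (Mu t) = Mu (ssubst as y t)"
| "ssubst as y (FNam a t) =
     (if a \<in> set as then FNam a (App (ssubst as y t) (FVar y)) else FNam a (ssubst as y t))"
| "ssubst as y (BNam i t) = BNam i (ssubst as y t)"

inductive step :: "trm \<Rightarrow> trm \<Rightarrow> bool" where
  beta: "step (App (Lam u) v) (substl 0 v u)"
| mu: "step (App (Mu u) v) (Mu (substm 0 (liftm 0 v) u))"
| appL: "step t t' \<Longrightarrow> step (App t u) (App t' u)"
| appR: "step u u' \<Longrightarrow> step (App t u) (App t u')"
| lam: "step t t' \<Longrightarrow> step (Lam t) (Lam t')"
| muc: "step t t' \<Longrightarrow> step (Mu t) (Mu t')"
| fnam: "step t t' \<Longrightarrow> step (FNam a t) (FNam a t')"
| bnam: "step t t' \<Longrightarrow> step (BNam i t) (BNam i t')"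

text \<open>one-step reduction contracting a redex whose argument is the lambda-variable y
(union of beta_y and mu_y)\<close>
inductive step_y :: "nat \<Rightarrow> trm \<Rightarrow> trm \<Rightarrow> bool" for y where
  beta: "step_y y (App (Lam u) (FVar y)) (substl 0 (FVar y) u)"
| mu: "step_y y (App (Mu u) (FVar y)) (Mu (substm 0 (liftm 0 (FVar y)) u))"
| appL: "step_y y t t' \<Longrightarrow> step_y y (App t u) (App t' u)"
| appR: "step_y y u u' \<Longrightarrow> step_y y (App t u) (App t u')"
| lam: "step_y y t t' \<Longrightarrow> step_y y (Lam t) (Lam t')"
| muc: "step_y y t t' \<Longrightarrow> step_y y (Mu t) (Mu t')"
| fnam: "step_y y t t' \<Longrightarrow> step_y y (FNam a t) (FNam a t')"
| bnam: "step_y y t t' \<Longrightarrow> step_y y (BNam i t) (BNam i t')"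

fun normal :: "trm \<Rightarrow> bool" where
  "normal (FVar x) = True"
| "normal (BVar i) = True"
| "normal (Lam t) = normal t"
| "normal (App t u) =
     ((case t of Lam _ \<Rightarrow> False | Mu _ \<Rightarrow> False | _ \<Rightarrow> True) \<and> normal t \<and> normal u)"
| "normal (Mu t) = normal t"
| "normal (FNam a t) = normal t"
| "normal (BNam i t) = normal t"

end

theory Submission
  imports Defs
begin

text \<open>Every redex of \<open>t\<sigma>\<close> has argument \<open>y\<close>: the applications of \<open>t\<close> have neutral heads,
  and \<open>\<sigma>\<close> only creates applications to \<open>y\<close>. Neutral heads stay neutral under reduction and
  contracting a redex with argument \<open>y\<close> substitutes \<open>y\<close>, so this invariant is preserved; hence
  every reduction sequence starting from \<open>t\<sigma>\<close> consists of \<open>\<triangleright>\<^sub>y\<close>-steps.\<close>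

fun neutral :: "trm \<Rightarrow> bool" where
  "neutral (FVar x) = True"
| "neutral (BVar i) = True"
| "neutral (Lam t) = False"
| "neutral (App a b) = neutral a"
| "neutral (Mu t) = False"
| "neutral (FNam a t) = True"
| "neutral (BNam i t) = True"

text \<open>Requiring argument \<open>y\<close> of every application with a non-neutral head, not just of every
  redex, is what makes the property stable under reduction.\<close>

fun y_applied :: "nat \<Rightarrow> trm \<Rightarrow> bool" where
  "y_applied y (FVar x) = True"
| "y_applied y (BVar i) = True"
| "y_applied y (Lam t) = y_applied y t"
| "y_applied y (App a b) = ((neutral a \<or> b = FVar y) \<and> y_applied y a \<and> y_applied y b)"
| "y_applied y (Mu t) = y_applied y t"
| "y_applied y (FNam a t) = y_applied y t"
| "y_applied y (BNam i t) = y_applied y t"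

lemma neutral_substl: "neutral a \<Longrightarrow> neutral (substl k (FVar y) a)"
  by (induction a arbitrary: k) auto

lemma neutral_substm: "neutral a \<Longrightarrow> neutral (substm k (FVar y) a)"
  by (induction a arbitrary: k) auto

lemma neutral_ssubst: "neutral a \<Longrightarrow> neutral (ssubst as y a)"
  by (induction a) auto

lemma neutral_step: "step s s' \<Longrightarrow> neutral s \<Longrightarrow> neutral s'"
  by (induction rule: step.induct) auto

lemma normal_imp_neutral_or_abs: "normal a \<Longrightarrow> neutral a \<or> (\<exists>u. a = Lam u) \<or> (\<exists>u. a = Mu u)"
  by (induction a) (auto split: trm.splits)

lemma y_applied_substl: "y_applied y u \<Longrightarrow> y_applied y (substl k (FVar y) u)"
  by (induction u arbitrary: k) (auto simp: neutral_substl)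

lemma y_applied_substm: "y_applied y u \<Longrightarrow> y_applied y (substm k (FVar y) u)"
  by (induction u arbitrary: k) (auto simp: neutral_substm)

lemma y_applied_ssubst_normal: "normal t \<Longrightarrow> y_applied y (ssubst as y t)"
proof (induction t)
  case (App a b)
  then have "neutral a"
    using normal_imp_neutral_or_abs[of a] by (auto split: trm.splits)
  with App show ?case by (auto simp: neutral_ssubst)
qed auto

lemma step_FVar_False: "\<not> step (FVar x) s"
  by (auto elim: step.cases)

lemma y_applied_step: "step s s' \<Longrightarrow> y_applied y s \<Longrightarrow> y_applied y s'"
  by (induction rule: step.induct)
    (auto simp: y_applied_substl y_applied_substm neutral_step step_FVar_False)

lemma step_imp_step_y: "step s s' \<Longrightarrow> y_applied y s \<Longrightarrow> step_y y s s'"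
proof (induction rule: step.induct)
  case (mu u v)
  then show ?case using step_y.mu[of y u] by simp
qed (auto intro: step_y.intros simp: step_FVar_False)

lemma steps_imp_steps_y:
  assumes "step\<^sup>*\<^sup>* s s'" and "y_applied y s"
  shows "(step_y y)\<^sup>*\<^sup>* s s'"
proof -
  from assms have "y_applied y s' \<and> (step_y y)\<^sup>*\<^sup>* s s'"
  proof (induction rule: rtranclp_induct)
    case (step s' s'')
    then show ?case
      by (auto intro: rtranclp.rtrancl_into_rtrancl y_applied_step step_imp_step_y)
  qed simp
  then show ?thesis ..
qed

theorem mainTheorem18:
  fixes t \<tau> :: trm and y :: nat and as :: "nat list"
  assumes "lc 0 0 t"
    and "normal t"
    and "distinct as"
    and "step\<^sup>*\<^sup>* (ssubst as y t) \<tau>"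
    and "normal \<tau>"
  shows "(step_y y)\<^sup>*\<^sup>* (ssubst as y t) \<tau>"
  using steps_imp_steps_y[OF assms(4) y_applied_ssubst_normal[OF assms(2)]] .

end
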